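(* There exists a $9$-CMS$(9,2)$.
   Context: Let $I_n=\{0,1,\dots,n-1\}$. An $n\times n$ integer matrix is a general magic square if all row sums, column sums, the main diagonal sum and the back diagonal sum (entries $(i,n-1-i)$) are equal. A general magic square $M=(m_{i,j})$ is a general $t$-multimagic square if each entrywise power $M^{*e}=(m_{i,j}^e)$, $e=1,\dots,t$, is a general magic square; if moreover its entries are exactly $0,1,\dots,n^2-1$ it is an MS$(n,t)$. Define $S_e(n)=\frac{1}{n}\sum_{k\in I_{n^2}}k^e$. A family $\{B_0,\dots,B_{m-1}\}$ of MS$(n,t)$s, $B_s=(b^{(s)}_{i,j})$, is an $m$-CMS$(n,t)$ if (R1) $\sum_{s\in I_m}\sum_{j\in I_n}(b^{(s)}_{i,j})^{t+1}=mS_{t+1}(n)$ for every $i$; (R2) $\sum_{s\in I_m}\sum_{i\in I_n}(b^{(s)}_{i,j})^{t+1}=mS_{t+1}(n)$ for every $j$; (R3) $\sum_{s}\sum_{i}(b^{(s)}_{i,i})^{t+1}=\sum_{s}\sum_{i}(b^{(s)}_{i,n-1-i})^{t+1}=mS_{t+1}(n)$. *)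

theory Defs
  imports Complex_Main
begin

text \<open>An n x n integer matrix is represented as a function nat => nat => int;
only entries with indices in I_n = {..<n} are relevant.\<close>

definition general_magic :: "nat \<Rightarrow> (nat \<Rightarrow> nat \<Rightarrow> int) \<Rightarrow> bool" where
  "general_magic n M \<longleftrightarrow> (\<exists>c.
     (\<forall>i<n. (\<Sum>j<n. M i j) = c) \<and>
     (\<forall>j<n. (\<Sum>i<n. M i j) = c) \<and>
     (\<Sum>i<n. M i i) = c \<and>
     (\<Sum>i<n. M i (n - 1 - i)) = c)"

definition general_multimagic :: "nat \<Rightarrow> nat \<Rightarrow> (nat \<Rightarrow> nat \<Rightarrow> int) \<Rightarrow> bool" where
  "general_multimagic n t M \<longleftrightarrow> (\<forall>e\<in>{1..t}. general_magic n (\<lambda>i j. (M i j) ^ e))"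

definition MS :: "nat \<Rightarrow> nat \<Rightarrow> (nat \<Rightarrow> nat \<Rightarrow> int) \<Rightarrow> bool" where
  "MS n t M \<longleftrightarrow> general_multimagic n t M \<and>
     (\<lambda>(i, j). M i j) ` ({..<n} \<times> {..<n}) = int ` {..<n^2}"

definition S :: "nat \<Rightarrow> nat \<Rightarrow> rat" where
  "S e n = (1 / of_nat n) * (\<Sum>k<n^2. of_nat k ^ e)"

definition CMS :: "nat \<Rightarrow> nat \<Rightarrow> nat \<Rightarrow> (nat \<Rightarrow> nat \<Rightarrow> nat \<Rightarrow> int) \<Rightarrow> bool" where
  "CMS m n t B \<longleftrightarrow>
     (\<forall>s<m. MS n t (B s)) \<and>
     (\<forall>i<n. of_int (\<Sum>s<m. \<Sum>j<n. (B s i j) ^ (t + 1)) = of_nat m * S (t + 1) n) \<and>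
     (\<forall>j<n. of_int (\<Sum>s<m. \<Sum>i<n. (B s i j) ^ (t + 1)) = of_nat m * S (t + 1) n) \<and>
     of_int (\<Sum>s<m. \<Sum>i<n. (B s i i) ^ (t + 1)) = of_nat m * S (t + 1) n \<and>
     of_int (\<Sum>s<m. \<Sum>i<n. (B s i (n - 1 - i)) ^ (t + 1)) = of_nat m * S (t + 1) n"

end

theory Submission
  imports Defs "HOL-Library.Numeral_Type" "HOL-Number_Theory.Cong"
begin

text \<open>
  Write the entry of square \<open>s\<close> in cell \<open>(i, j)\<close> in base 3. Its four ternary digits are
  affine functions over \<open>\<int>/3\<close> of the ternary digits of \<open>s\<close>, \<open>i\<close> and \<open>j\<close>, chosen so that the
  resulting linear systems are invertible: on each square, and on each row, column and diagonal
  taken across all nine squares (81 cells), the entries run through \<open>0, \<dots>, 80\<close> exactly once.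
  The latter makes (R1)--(R3) trivial, since the cubes along such a line add up to the full
  power sum \<open>\<Sum>k<81. k\<^sup>3 = 9 S\<^sub>3(9)\<close>. The magic conditions for exponents 1 and 2 are
  checked by evaluation.
\<close>

lemma sum_power_bij_betw_lessThan:
  assumes "bij_betw f A (int ` {..<N})"
  shows "(\<Sum>x\<in>A. f x ^ e) = (\<Sum>k<N. int k ^ e)"
proof -
  have "(\<Sum>x\<in>A. f x ^ e) = (\<Sum>y\<in>int ` {..<N}. y ^ e)"
    using sum.reindex_bij_betw[OF assms, of "\<lambda>y. y ^ e"] by simp
  also have "\<dots> = (\<Sum>k<N. int k ^ e)"
    by (simp add: sum.reindex)
  finally show ?thesis .
qed

lemma family_line_power_sum:
  assumes "0 < n" and "bij_betw (\<lambda>(s, k). g s k) ({..<n} \<times> {..<n}) (int ` {..<n^2})"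
  shows "of_int (\<Sum>s<n. \<Sum>k<n. g s k ^ e) = of_nat n * S e n"
proof -
  have "(\<Sum>s<n. \<Sum>k<n. g s k ^ e) = (\<Sum>(s, k)\<in>{..<n} \<times> {..<n}. g s k ^ e)"
    by (simp add: sum.cartesian_product)
  also have "\<dots> = (\<Sum>k<n^2. int k ^ e)"
    using sum_power_bij_betw_lessThan[OF assms(2), of e] by (simp add: case_prod_beta')
  finally show ?thesis
    using assms(1) by (simp add: S_def)
qed

lemma CMS_if_lines_bij_betw:
  fixes n t :: nat and B :: "nat \<Rightarrow> nat \<Rightarrow> nat \<Rightarrow> int"
  defines "cells \<equiv> {..<n} \<times> {..<n}" and "values \<equiv> int ` {..<n^2}"
  assumes "0 < n" and "\<forall>s<n. MS n t (B s)"
    and "\<forall>i<n. bij_betw (\<lambda>(s, j). B s i j) cells values"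
    and "\<forall>j<n. bij_betw (\<lambda>(s, i). B s i j) cells values"
    and "bij_betw (\<lambda>(s, i). B s i i) cells values"
    and "bij_betw (\<lambda>(s, i). B s i (n - 1 - i)) cells values"
  shows "CMS n n t B"
proof -
  have line: "of_int (\<Sum>s<n. \<Sum>k<n. g s k ^ (t + 1)) = of_nat n * S (t + 1) n"
    if "bij_betw (\<lambda>(s, k). g s k) cells values" for g
    using family_line_power_sum[OF \<open>0 < n\<close>] that unfolding cells_def values_def .
  show ?thesis
    unfolding CMS_def
    by (intro conjI allI impI line) (use assms(4-) in simp_all)
qed

lemma MS_if_bij_betw:
  assumes "general_multimagic n t M"
    and "bij_betw (\<lambda>(i, j). M i j) ({..<n} \<times> {..<n}) (int ` {..<n^2})"
  shows "MS n t M"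
  using assms by (simp add: MS_def bij_betw_def)

lemma bij_betw_int_lessThan:
  assumes "inj_on f A" and "f ` A \<subseteq> int ` {..<N}" and "card A = N"
  shows "bij_betw f A (int ` {..<N})"
proof -
  have "card (int ` {..<N}) = N"
    by (simp add: card_image)
  then show ?thesis
    using assms by (simp add: bij_betw_def card_image card_subset_eq)
qed

definition ternary :: "nat \<Rightarrow> nat \<Rightarrow> nat \<Rightarrow> nat \<Rightarrow> nat" where
  "ternary a b c d = ((a mod 3 * 3 + b mod 3) * 3 + c mod 3) * 3 + d mod 3"

lemma ternary_less: "ternary a b c d < 81"
proof -
  have "a mod 3 \<le> 2" "b mod 3 \<le> 2" "c mod 3 \<le> 2" "d mod 3 \<le> 2"
    by simp_all
  then show ?thesis
    unfolding ternary_def distrib_right mult.assoc by linarith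
qed

lemma mult_3_add_eq_iff:
  "(r :: nat) < 3 \<Longrightarrow> r' < 3 \<Longrightarrow> q * 3 + r = q' * 3 + r' \<longleftrightarrow> q = q' \<and> r = r'"
  by presburger

lemma ternary_eq_iff:
  "ternary a b c d = ternary a' b' c' d' \<longleftrightarrow>
     [a = a'] (mod 3) \<and> [b = b'] (mod 3) \<and> [c = c'] (mod 3) \<and> [d = d'] (mod 3)"
  unfolding ternary_def cong_def
  by (simp only: mult_3_add_eq_iff mod_less_divisor zero_less_numeral conj_assoc)

definition hi_trit :: "nat \<Rightarrow> 3" where
  "hi_trit k = of_nat (k div 3)"

definition lo_trit :: "nat \<Rightarrow> 3" where
  "lo_trit k = of_nat (k mod 3)"

lemma of_nat_3_eq_iff: "(of_nat a :: 3) = of_nat b \<longleftrightarrow> [a = b] (mod 3)"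
  by (simp add: of_nat_eq_iff_cong_CHAR)

lemma eq_iff_trits:
  assumes "k < 9" and "k' < 9"
  shows "k = k' \<longleftrightarrow> hi_trit k = hi_trit k' \<and> lo_trit k = lo_trit k'"
proof -
  have "k div 3 < 3" "k' div 3 < 3"
    using assms by simp_all
  then show ?thesis
    unfolding hi_trit_def lo_trit_def of_nat_3_eq_iff cong_def
    by (metis mod_less mod_less_divisor zero_less_numeral div_mult_mod_eq)
qed

lemma trits_8_minus:
  assumes "k < 9"
  shows "hi_trit (8 - k) = 2 - hi_trit k" and "lo_trit (8 - k) = 2 - lo_trit k"
proof -
  have "k \<in> {..<9}"
    using assms by simp
  then show "hi_trit (8 - k) = 2 - hi_trit k" and "lo_trit (8 - k) = 2 - lo_trit k"
    unfolding hi_trit_def lo_trit_def by (auto simp: lessThan_nat_numeral)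
qed

lemma mult_2_cancel_3: "2 * x = 2 * (y :: 3) \<Longrightarrow> x = y"
proof -
  assume "2 * x = 2 * y"
  then have "2 * (2 * x) = 2 * (2 * y)"
    by simp
  moreover have "(4 :: 3) = 1"
    by simp
  ultimately show "x = y"
    by (simp add: mult.assoc[symmetric])
qed

lemma inj_on_lessThan_9_pairsI:
  assumes "\<And>a b a' b'. \<lbrakk>a < 9; b < 9; a' < 9; b' < 9; f a b = f a' b'\<rbrakk> \<Longrightarrow>
    hi_trit a = hi_trit a' \<and> lo_trit a = lo_trit a' \<and> hi_trit b = hi_trit b' \<and> lo_trit b = lo_trit b'"
  shows "inj_on (\<lambda>(a, b). f a b) ({..<9} \<times> {..<9})"
proof (rule inj_onI)
  fix x y
  assume "x \<in> {..<9} \<times> {..<9}" "y \<in> {..<9} \<times> {..<9}" "(\<lambda>(a, b). f a b) x = (\<lambda>(a, b). f a b) y"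
  then obtain a b a' b' where "x = (a, b)" "y = (a', b')" "a < 9" "b < 9" "a' < 9" "b' < 9"
    "f a b = f a' b'"
    by auto
  then show "x = y"
    using assms eq_iff_trits by metis
qed

lemma square_digit_system_unique:
  fixes a b c d a' b' c' d' :: 3
  assumes e3: "2 * a + d = 2 * a' + d'" and e2: "b + c = b' + c'"
    and e1: "2 * a + 2 * b + c + 2 * d = 2 * a' + 2 * b' + c' + 2 * d'"
    and e0: "a + 2 * b + c + d = a' + 2 * b' + c' + d'"
  shows "a = a' \<and> b = b' \<and> c = c' \<and> d = d'"
proof -
  have "(2 * a + 2 * b + c + 2 * d) - (a + 2 * b + c + d) - (2 * a + d)
      = (2 * a' + 2 * b' + c' + 2 * d') - (a' + 2 * b' + c' + d') - (2 * a' + d')"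
    by (simp only: e0 e1 e3)
  then have a: "a = a'"
    by (simp add: algebra_simps)
  have "(a + 2 * b + c + d) - (b + c) - (2 * a + d) = (a' + 2 * b' + c' + d') - (b' + c') - (2 * a' + d')"
    by (simp only: e0 e2 e3)
  with a have b: "b = b'"
    by (simp add: algebra_simps)
  show ?thesis
    using a b e2 e3 by simp
qed

definition cms9 :: "nat \<Rightarrow> nat \<Rightarrow> nat \<Rightarrow> int" where
  "cms9 s i j = int (ternary
     (2 * (i div 3) + j mod 3 + 1)
     (i mod 3 + j div 3 + 2)
     (2 * (i div 3) + 2 * (i mod 3) + j div 3 + 2 * (j mod 3) + s mod 3 + 1)
     (i div 3 + 2 * (i mod 3) + j div 3 + j mod 3 + s div 3 + 1))"

lemma cms9_in_range: "cms9 s i j \<in> int ` {..<81}"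
  unfolding cms9_def using ternary_less by blast

lemma cms9_eq_iff:
  "cms9 s i j = cms9 s' i' j' \<longleftrightarrow>
     2 * hi_trit i + lo_trit j = 2 * hi_trit i' + lo_trit j' \<and>
     lo_trit i + hi_trit j = lo_trit i' + hi_trit j' \<and>
     2 * hi_trit i + 2 * lo_trit i + hi_trit j + 2 * lo_trit j + lo_trit s =
       2 * hi_trit i' + 2 * lo_trit i' + hi_trit j' + 2 * lo_trit j' + lo_trit s' \<and>
     hi_trit i + 2 * lo_trit i + hi_trit j + lo_trit j + hi_trit s =
       hi_trit i' + 2 * lo_trit i' + hi_trit j' + lo_trit j' + hi_trit s'"
  unfolding cms9_def hi_trit_def lo_trit_def
  by (simp add: ternary_eq_iff flip: of_nat_3_eq_iff)

lemma cms9_square_inj: "inj_on (\<lambda>(i, j). cms9 s i j) ({..<9} \<times> {..<9})"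
proof (rule inj_on_lessThan_9_pairsI)
  fix i j i' j'
  assume "cms9 s i j = cms9 s i' j'"
  then have "2 * hi_trit i + lo_trit j = 2 * hi_trit i' + lo_trit j'"
    and "lo_trit i + hi_trit j = lo_trit i' + hi_trit j'"
    and "2 * hi_trit i + 2 * lo_trit i + hi_trit j + 2 * lo_trit j =
      2 * hi_trit i' + 2 * lo_trit i' + hi_trit j' + 2 * lo_trit j'"
    and "hi_trit i + 2 * lo_trit i + hi_trit j + lo_trit j =
      hi_trit i' + 2 * lo_trit i' + hi_trit j' + lo_trit j'"
    unfolding cms9_eq_iff by simp_all
  then show "hi_trit i = hi_trit i' \<and> lo_trit i = lo_trit i' \<and> hi_trit j = hi_trit j' \<and> lo_trit j = lo_trit j'"
    by (rule square_digit_system_unique)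
qed

lemma cms9_row_inj: "inj_on (\<lambda>(s, j). cms9 s i j) ({..<9} \<times> {..<9})"
  by (rule inj_on_lessThan_9_pairsI) (auto simp: cms9_eq_iff)

lemma cms9_column_inj: "inj_on (\<lambda>(s, i). cms9 s i j) ({..<9} \<times> {..<9})"
  by (rule inj_on_lessThan_9_pairsI) (auto simp: cms9_eq_iff dest: mult_2_cancel_3)

lemma cms9_diagonal_inj: "inj_on (\<lambda>(s, k). cms9 s k k) ({..<9} \<times> {..<9})"
proof (rule inj_on_lessThan_9_pairsI)
  fix s k s' k'
  assume eq: "cms9 s k k = cms9 s' k' k'"
  then have e3: "2 * hi_trit k + lo_trit k = 2 * hi_trit k' + lo_trit k'"
    and e2: "lo_trit k + hi_trit k = lo_trit k' + hi_trit k'"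
    unfolding cms9_eq_iff by simp_all
  have "(2 * hi_trit k + lo_trit k) - (lo_trit k + hi_trit k) =
      (2 * hi_trit k' + lo_trit k') - (lo_trit k' + hi_trit k')"
    by (simp only: e2 e3)
  then have hi: "hi_trit k = hi_trit k'"
    by (simp add: algebra_simps)
  with e2 have lo: "lo_trit k = lo_trit k'"
    by simp
  from eq show "hi_trit s = hi_trit s' \<and> lo_trit s = lo_trit s' \<and> hi_trit k = hi_trit k' \<and> lo_trit k = lo_trit k'"
    by (simp add: cms9_eq_iff hi lo)
qed

lemma cms9_antidiagonal_inj: "inj_on (\<lambda>(s, k). cms9 s k (8 - k)) ({..<9} \<times> {..<9})"
proof (rule inj_on_lessThan_9_pairsI)
  fix s k s' k'
  assume "k < 9" "k' < 9" and eq: "cms9 s k (8 - k) = cms9 s' k' (8 - k')"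
  then have e3: "2 * hi_trit k + (2 - lo_trit k) = 2 * hi_trit k' + (2 - lo_trit k')"
    and e2: "lo_trit k + (2 - hi_trit k) = lo_trit k' + (2 - hi_trit k')"
    unfolding cms9_eq_iff by (simp_all add: trits_8_minus)
  have "(2 * hi_trit k + (2 - lo_trit k)) + (lo_trit k + (2 - hi_trit k)) =
      (2 * hi_trit k' + (2 - lo_trit k')) + (lo_trit k' + (2 - hi_trit k'))"
    by (simp only: e2 e3)
  then have hi: "hi_trit k = hi_trit k'"
    by (simp add: algebra_simps)
  with e2 have lo: "lo_trit k = lo_trit k'"
    by simp
  from eq show "hi_trit s = hi_trit s' \<and> lo_trit s = lo_trit s' \<and> hi_trit k = hi_trit k' \<and> lo_trit k = lo_trit k'"
    using \<open>k < 9\<close> \<open>k' < 9\<close> by (simp add: cms9_eq_iff trits_8_minus hi lo)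
qed

lemma cms9_bij_betw:
  fixes s i j :: "nat \<Rightarrow> nat \<Rightarrow> nat"
  assumes "inj_on (\<lambda>(a, b). cms9 (s a b) (i a b) (j a b)) ({..<9} \<times> {..<9})"
  shows "bij_betw (\<lambda>(a, b). cms9 (s a b) (i a b) (j a b)) ({..<9} \<times> {..<9}) (int ` {..<9\<^sup>2})"
  using assms cms9_in_range by (intro bij_betw_int_lessThan) auto

lemma sum_lessThan_9: "(\<Sum>k<(9::nat). f k) = f 0 + f 1 + f 2 + f 3 + f 4 + f 5 + f 6 + f 7 + f 8"
  by (simp add: numeral_eq_Suc ac_simps)

lemma all_lessThan_9:
  "(\<forall>k<(9::nat). P k) \<longleftrightarrow> P 0 \<and> P 1 \<and> P 2 \<and> P 3 \<and> P 4 \<and> P 5 \<and> P 6 \<and> P 7 \<and> P 8"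
proof -
  have "(\<forall>k<(9::nat). P k) \<longleftrightarrow> (\<forall>k\<in>{..<9}. P k)"
    by auto
  then show ?thesis
    by (auto simp: lessThan_nat_numeral)
qed

text \<open>The line sums are \<open>(\<Sum>k<81. k\<^sup>e) / 9\<close> for \<open>e = 1, 2\<close>.\<close>

lemma cms9_row_sums:
  "\<forall>s<9. \<forall>i<9. (\<Sum>j<9. cms9 s i j) = 360 \<and> (\<Sum>j<9. cms9 s i j ^ 2) = 19320"
  unfolding all_lessThan_9 sum_lessThan_9 by (simp add: cms9_def ternary_def)

lemma cms9_column_sums:
  "\<forall>s<9. \<forall>j<9. (\<Sum>i<9. cms9 s i j) = 360 \<and> (\<Sum>i<9. cms9 s i j ^ 2) = 19320"
  unfolding all_lessThan_9 sum_lessThan_9 by (simp add: cms9_def ternary_def)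

lemma cms9_diagonal_sums:
  "\<forall>s<9. (\<Sum>i<9. cms9 s i i) = 360 \<and> (\<Sum>i<9. cms9 s i i ^ 2) = 19320 \<and>
     (\<Sum>i<9. cms9 s i (8 - i)) = 360 \<and> (\<Sum>i<9. cms9 s i (8 - i) ^ 2) = 19320"
  unfolding all_lessThan_9 sum_lessThan_9 by (simp add: cms9_def ternary_def)

lemma cms9_multimagic:
  assumes "s < 9"
  shows "general_multimagic 9 2 (cms9 s)"
proof -
  have "e = 1 \<or> e = 2" if "e \<in> {1..2}" for e :: nat
    using that by auto
  then show ?thesis
    using assms cms9_row_sums cms9_column_sums cms9_diagonal_sums
    unfolding general_multimagic_def general_magic_def by fastforce
qed

lemma cms9_MS:
  assumes "s < 9"
  shows "MS 9 2 (cms9 s)"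
proof (rule MS_if_bij_betw)
  show "general_multimagic 9 2 (cms9 s)"
    using assms by (rule cms9_multimagic)
  show "bij_betw (\<lambda>(i, j). cms9 s i j) ({..<9} \<times> {..<9}) (int ` {..<9\<^sup>2})"
    using cms9_square_inj by (rule cms9_bij_betw)
qed

theorem lemma3p1:
  shows "\<exists>B. CMS 9 9 2 B"
proof
  show "CMS 9 9 2 cms9"
  proof (rule CMS_if_lines_bij_betw)
    show "\<forall>s<9. MS 9 2 (cms9 s)"
      by (blast intro: cms9_MS)
    show "\<forall>i<9. bij_betw (\<lambda>(s, j). cms9 s i j) ({..<9} \<times> {..<9}) (int ` {..<9\<^sup>2})"
      by (intro allI impI cms9_bij_betw cms9_row_inj)
    show "\<forall>j<9. bij_betw (\<lambda>(s, i). cms9 s i j) ({..<9} \<times> {..<9}) (int ` {..<9\<^sup>2})"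
      by (intro allI impI cms9_bij_betw cms9_column_inj)
    show "bij_betw (\<lambda>(s, i). cms9 s i i) ({..<9} \<times> {..<9}) (int ` {..<9\<^sup>2})"
      by (rule cms9_bij_betw[OF cms9_diagonal_inj])
    show "bij_betw (\<lambda>(s, i). cms9 s i (9 - 1 - i)) ({..<9} \<times> {..<9}) (int ` {..<9\<^sup>2})"
      using cms9_bij_betw[OF cms9_antidiagonal_inj] by simp
  qed simp
qed

end
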